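(* Let $d\ge 1$, $B>0$, $\alpha>0$, $D>0$, and let $\mathcal{X}\subseteq\mathbb{R}^d$ satisfy $\mathcal{X}\supseteq\{x\in\mathbb{R}^d:\|x\|_\infty\le D\}$. If there exists a pair $(f,O)\in\mathcal{O}_{\mathtt{sc}}$ on $\mathcal{X}$ (with parameters $B,\alpha$), then \[ \frac{B}{\alpha}\ \ge\ \frac{D\,d^{1/2}}{4}. \]
   Context: An oracle $O$ for a function $f:\mathcal{X}\to\mathbb{R}$ returns, on query $x\in\mathcal{X}$, a random vector $\hat g(x)\in\mathbb{R}^d$. The class $\mathcal{O}_{\mathtt{sc}}$ consists of all pairs $(f,O)$ such that: $f$ is convex on $\mathcal{X}$; $f$ is $\alpha$-strongly convex on $\mathcal{X}$, i.e. $x\mapsto f(x)-\frac{\alpha}{2}\|x\|_2^2$ is convex on $\mathcal{X}$; $\mathbb{E}[\hat g(x)\mid x]\in\partial f(x)$ for all $x\in\mathcal{X}$ (where $\partial f(x)$ is the subgradient set); and $\Pr(\|\hat g(x)\|_2^2\le B^2\mid x)=1$ for all $x\in\mathcal{X}$. *)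

theory Defs
  imports "HOL-Analysis.Analysis" "HOL-Probability.Probability"
begin

definition subdifferential :: "('a::real_inner) set \<Rightarrow> ('a \<Rightarrow> real) \<Rightarrow> 'a \<Rightarrow> 'a set" where
  "subdifferential X f x = {g. \<forall>y\<in>X. f y \<ge> f x + inner g (y - x)}"

text \<open>An oracle maps each query x to the distribution (a probability measure on
  the Borel sets of R^d) of the random vector g(x).  The class O_sc with
  parameters B and alpha on the domain X.\<close>
definition O_sc :: "real \<Rightarrow> real \<Rightarrow> ('a::euclidean_space) set \<Rightarrow> ('a \<Rightarrow> real) \<Rightarrow> ('a \<Rightarrow> 'a measure) \<Rightarrow> bool" where
  "O_sc B \<alpha> X f Orc \<longleftrightarrow>
     convex_on X f \<and>
     convex_on X (\<lambda>x. f x - \<alpha> / 2 * (norm x)\<^sup>2) \<and>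
     (\<forall>x\<in>X. prob_space (Orc x) \<and> sets (Orc x) = sets borel \<and>
        integrable (Orc x) (\<lambda>v. v) \<and>
        (\<integral>v. v \<partial>(Orc x)) \<in> subdifferential X f x \<and>
        (AE v in Orc x. (norm v)\<^sup>2 \<le> B\<^sup>2))"

end

theory Submission
  imports Defs
begin

text \<open>Subgradients at \<open>x\<close> and \<open>-x\<close> bound the value of \<open>f\<close> at the midpoint \<open>0\<close> from below
  by \<open>(f x + f (-x))/2 - B \<parallel>x\<parallel>\<close>, while \<open>\<alpha>\<close>-strong convexity bounds it from above by
  \<open>(f x + f (-x))/2 - \<alpha>/2 \<parallel>x\<parallel>\<^sup>2\<close>.  Hence \<open>\<alpha> \<parallel>x\<parallel> \<le> 2B\<close>, and the cube of half-width \<open>D\<close>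
  contains a corner \<open>x\<close> of norm \<open>D \<surd>d\<close>.\<close>

lemma norm_expectation_le:
  fixes M :: "('a::euclidean_space) measure"
  assumes "prob_space M" "integrable M (\<lambda>v. v)" "AE v in M. (norm v)\<^sup>2 \<le> B\<^sup>2" "0 \<le> B"
  shows "norm (\<integral>v. v \<partial>M) \<le> B"
proof -
  interpret prob_space M by fact
  have bound: "AE v in M. norm v \<le> B"
    using assms(3) by eventually_elim (use assms(4) in \<open>simp add: abs_le_square_iff[symmetric]\<close>)
  have "norm (\<integral>v. v \<partial>M) \<le> (\<integral>v. norm v \<partial>M)" by (rule integral_norm_bound)
  also have "\<dots> \<le> (\<integral>v. B \<partial>M)"
    by (rule integral_mono_AE) (use assms(2) bound in auto)
  also have "\<dots> = B" by (simp add: prob_space)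
  finally show ?thesis .
qed

lemma O_sc_bounded_subgradient:
  assumes "O_sc B \<alpha> X f Orc" "x \<in> X" "0 \<le> B"
  obtains g where "g \<in> subdifferential X f x" "norm g \<le> B"
  using assms norm_expectation_le unfolding O_sc_def by blast

lemma strongly_convex_on_midpoint:
  fixes f :: "'a::real_inner \<Rightarrow> real"
  assumes "convex_on X (\<lambda>x. f x - \<alpha> / 2 * (norm x)\<^sup>2)" "x \<in> X" "y \<in> X"
  shows "f (midpoint x y) \<le> (f x + f y) / 2 - \<alpha> / 8 * (dist x y)\<^sup>2"
proof -
  have "f (midpoint x y) - \<alpha> / 2 * (norm (midpoint x y))\<^sup>2
      \<le> (f x - \<alpha> / 2 * (norm x)\<^sup>2) / 2 + (f y - \<alpha> / 2 * (norm y)\<^sup>2) / 2"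
    using convex_onD[OF assms(1), of "1/2" x y] assms(2,3)
    by (simp add: midpoint_def scaleR_add_right)
  moreover have "(norm (midpoint x y))\<^sup>2 = (norm x)\<^sup>2 / 2 + (norm y)\<^sup>2 / 2 - (dist x y)\<^sup>2 / 4"
    by (simp add: midpoint_def dist_norm power2_norm_eq_inner inner_add_left inner_add_right
        inner_diff_left inner_diff_right inner_commute field_simps)
  ultimately show ?thesis by (simp add: field_simps)
qed

lemma strongly_convex_bounded_subgradients_dist_le:
  fixes f :: "'a::real_inner \<Rightarrow> real"
  assumes "convex_on X (\<lambda>x. f x - \<alpha> / 2 * (norm x)\<^sup>2)"
    and "x \<in> X" "y \<in> X" "midpoint x y \<in> X"
    and "g \<in> subdifferential X f x" "norm g \<le> B"
    and "h \<in> subdifferential X f y" "norm h \<le> B"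
  shows "\<alpha> * dist x y \<le> 4 * B"
proof -
  let ?m = "midpoint x y"
  have subgradient: "f ?m \<ge> f x + inner g (?m - x)" "f ?m \<ge> f y + inner h (?m - y)"
    using assms(4,5,7) unfolding subdifferential_def by blast+
  have lower: "inner u v \<ge> - B * norm v" if "norm u \<le> B" for u v :: 'a
  proof -
    have "\<bar>inner u v\<bar> \<le> B * norm v"
      by (meson Cauchy_Schwarz_ineq2 mult_right_mono norm_ge_zero order_trans that)
    then show ?thesis by linarith
  qed
  have half_dist: "norm (?m - x) = dist x y / 2" "norm (?m - y) = dist x y / 2"
    using dist_midpoint(3,4)[of x y] by (simp_all add: dist_norm)
  have "inner g (?m - x) \<ge> - (B / 2 * dist x y)" "inner h (?m - y) \<ge> - (B / 2 * dist x y)"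
    using lower[OF assms(6), of "?m - x"] lower[OF assms(8), of "?m - y"] unfolding half_dist
    by simp_all
  with subgradient have "(f x + f y) / 2 - f ?m \<le> B / 2 * dist x y"
    by (simp add: field_simps)
  moreover have "\<alpha> / 8 * (dist x y)\<^sup>2 \<le> (f x + f y) / 2 - f ?m"
    using strongly_convex_on_midpoint[OF assms(1-3)] by linarith
  ultimately have "\<alpha> / 8 * (dist x y)\<^sup>2 \<le> B / 2 * dist x y"
    by linarith
  then have "\<alpha> * dist x y * dist x y \<le> 4 * B * dist x y"
    by (simp add: power2_eq_square algebra_simps)
  moreover have "0 \<le> B" using assms(6) norm_ge_zero order_trans by blast
  ultimately show ?thesis
    by (cases "dist x y = 0") (auto simp: mult_le_cancel_right)
qed

lemma norm_constant_vec: "norm (\<chi> i. c :: real ^ 'n) = \<bar>c\<bar> * sqrt (real CARD('n))"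
proof -
  have "inner (\<chi> i. c :: real ^ 'n) (\<chi> i. c) = real CARD('n) * c\<^sup>2"
    by (simp add: inner_vec_def power2_eq_square)
  then show ?thesis by (simp add: norm_eq_sqrt_inner real_sqrt_mult mult.commute)
qed

theorem lemma1:
  fixes B \<alpha> D :: real and X :: "(real ^ 'n) set"
    and f :: "real ^ 'n \<Rightarrow> real" and Orc :: "real ^ 'n \<Rightarrow> (real ^ 'n) measure"
  assumes "B > 0" and "\<alpha> > 0" and "D > 0"
    and "{x. \<forall>i. \<bar>x $ i\<bar> \<le> D} \<subseteq> X"
    and "O_sc B \<alpha> X f Orc"
  shows "B / \<alpha> \<ge> D * sqrt (real CARD('n)) / 4"
proof -
  define x :: "real ^ 'n" where "x = (\<chi> i. D)"
  have corners: "x \<in> X" "-x \<in> X" "midpoint x (-x) \<in> X"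
    using assms(3,4) by (auto simp: x_def midpoint_def)
  obtain g h where "g \<in> subdifferential X f x" "norm g \<le> B"
    and "h \<in> subdifferential X f (-x)" "norm h \<le> B"
    using O_sc_bounded_subgradient[OF assms(5)] corners(1,2) assms(1) by (metis less_le)
  moreover have "convex_on X (\<lambda>x. f x - \<alpha> / 2 * (norm x)\<^sup>2)"
    using assms(5) unfolding O_sc_def by blast
  ultimately have "\<alpha> * dist x (-x) \<le> 4 * B"
    using strongly_convex_bounded_subgradients_dist_le corners by blast
  moreover have "dist x (-x) = 2 * D * sqrt (real CARD('n))"
    using assms(3) by (simp add: dist_norm x_def norm_constant_vec flip: scaleR_2)
  ultimately show ?thesis
    using assms(1-3) by (simp add: field_simps)
qed

end
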